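(* Let $A_i, A_j, A_k, A_l$ be four distinct points lying on a circle in the Euclidean plane, in anticlockwise order (i.e. going around the circle anticlockwise one meets $A_i, A_j, A_k, A_l$ in this cyclic order). Then \[ \begin{vmatrix} x_{kl} & S_{ikl} & S_{jkl}\\ -x_{ij} & S_{ijk} & S_{ijl}\\ 0 & x_{ik} & x_{jl} \end{vmatrix} = \begin{vmatrix} x_{kl} & S_{ikl} & S_{jkl}\\ x_{ij} & S_{ijl} & S_{ijk}\\ 0 & x_{il} & x_{jk} \end{vmatrix} = \begin{vmatrix} x_{jk} & S_{ijk} & S_{jkl}\\ -x_{il} & S_{ikl} & S_{ijl}\\ 0 & x_{ik} & x_{jl} \end{vmatrix} = 0.\]
   Context: For points $A_p=(x_p,y_p)$ in the plane, $x_{pq}:=(x_q-x_p)^2+(y_q-y_p)^2$ denotes the squared distance between $A_p$ and $A_q$, and $S_{pqr}:=2[(x_q-x_p)(y_r-y_p)-(y_q-y_p)(x_r-x_p)]$ denotes four times the signed area of the triangle $A_pA_qA_r$ (positive when $A_p,A_q,A_r$ are ordered anticlockwise). *)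

theory Defs
  imports "HOL-Analysis.Analysis"
begin

definition sqd :: "real \<times> real \<Rightarrow> real \<times> real \<Rightarrow> real" where
  "sqd P Q = (fst Q - fst P)^2 + (snd Q - snd P)^2"

definition S3 :: "real \<times> real \<Rightarrow> real \<times> real \<Rightarrow> real \<times> real \<Rightarrow> real" where
  "S3 P Q R = 2 * ((fst Q - fst P) * (snd R - snd P) - (snd Q - snd P) * (fst R - fst P))"

definition concyclic_anticlockwise ::
  "real \<times> real \<Rightarrow> real \<times> real \<Rightarrow> real \<times> real \<Rightarrow> real \<times> real \<Rightarrow> bool" where
  "concyclic_anticlockwise Ai Aj Ak Al \<longleftrightarrow>
     (\<exists>c r ti tj tk tl. r > 0 \<and> ti < tj \<and> tj < tk \<and> tk < tl \<and> tl < ti + 2 * pi \<and>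
        Ai = (fst c + r * cos ti, snd c + r * sin ti) \<and>
        Aj = (fst c + r * cos tj, snd c + r * sin tj) \<and>
        Ak = (fst c + r * cos tk, snd c + r * sin tk) \<and>
        Al = (fst c + r * cos tl, snd c + r * sin tl))"

definition det3 :: "real \<Rightarrow> real \<Rightarrow> real \<Rightarrow> real \<Rightarrow> real \<Rightarrow> real \<Rightarrow> real \<Rightarrow> real \<Rightarrow> real \<Rightarrow> real" where
  "det3 a b c d e f g h i = det (vector [vector [a, b, c], vector [d, e, f], vector [g, h, i]] :: real^3^3)"

end

theory Submission imports Defs begin

text \<open>Parametrize the circle by angles and write
  \<open>c\<^sub>p\<^sub>q = 2 sin ((t\<^sub>q - t\<^sub>p) / 2)\<close> for the signed chord between \<open>A\<^sub>p\<close> and \<open>A\<^sub>q\<close>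
  on the unit circle. Then \<open>x\<^sub>p\<^sub>q = r\<^sup>2 c\<^sub>p\<^sub>q\<^sup>2\<close> and \<open>S\<^sub>p\<^sub>q\<^sub>r = r\<^sup>2 c\<^sub>p\<^sub>q c\<^sub>q\<^sub>r c\<^sub>p\<^sub>r\<close>,
  so each determinant is \<open>r\<^sup>6\<close> times four chords times the cubic
  \<open>c\<^sub>k\<^sub>l c\<^sub>j\<^sub>k c\<^sub>j\<^sub>l - c\<^sub>k\<^sub>l c\<^sub>i\<^sub>l c\<^sub>i\<^sub>k + c\<^sub>i\<^sub>j c\<^sub>i\<^sub>l c\<^sub>j\<^sub>l - c\<^sub>i\<^sub>j c\<^sub>j\<^sub>k c\<^sub>i\<^sub>k\<close>.
  With \<open>U\<^sub>p = exp (i t\<^sub>p)\<close> this cubic becomes, up to a nonzero factor, the Laplace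
  expansion of the \<open>4 \<times> 4\<close> determinant with rows \<open>(U\<^sub>p, 1, U\<^sub>p, U\<^sub>p\<^sup>2)\<close>, which has two
  equal columns; so it vanishes for any four points of a circle, whatever their order.
  In half-angle coordinates \<open>cos (t\<^sub>p / 2)\<close>, \<open>sin (t\<^sub>p / 2)\<close> all these facts are
  polynomial identities modulo \<open>cos\<^sup>2 + sin\<^sup>2 = 1\<close>.\<close>

definition circle_point :: "real \<times> real \<Rightarrow> real \<Rightarrow> real \<Rightarrow> real \<times> real" where
  "circle_point c r t = (fst c + r * cos t, snd c + r * sin t)"

definition signed_chord :: "real \<Rightarrow> real \<Rightarrow> real" where
  "signed_chord s t = 2 * sin ((t - s) / 2)"

lemma circle_point_half_angle:
  "circle_point c r t =
     (fst c + r * (cos (t/2)^2 - sin (t/2)^2), snd c + 2 * r * cos (t/2) * sin (t/2))"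
proof -
  have "cos t = cos (2 * (t/2))" "sin t = sin (2 * (t/2))" by simp_all
  then show ?thesis unfolding circle_point_def cos_double sin_double by simp
qed

lemma signed_chord_half_angle:
  "signed_chord s t = 2 * (cos (s/2) * sin (t/2) - sin (s/2) * cos (t/2))"
  unfolding signed_chord_def diff_divide_distrib sin_diff by simp

lemma sqd_circle_point:
  "sqd (circle_point c r s) (circle_point c r t) = r^2 * (signed_chord s t)^2"
proof -
  have "cos (s/2)^2 + sin (s/2)^2 = 1" "cos (t/2)^2 + sin (t/2)^2 = 1" by simp_all
  then show ?thesis
    unfolding circle_point_half_angle signed_chord_half_angle sqd_def fst_conv snd_conv
    by algebra
qed

lemma S3_circle_point:
  "S3 (circle_point c r s) (circle_point c r t) (circle_point c r u) =
     r^2 * (signed_chord s t * signed_chord t u * signed_chord s u)"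
proof -
  have "cos (s/2)^2 + sin (s/2)^2 = 1" "cos (t/2)^2 + sin (t/2)^2 = 1"
       "cos (u/2)^2 + sin (u/2)^2 = 1" by simp_all
  then show ?thesis
    unfolding circle_point_half_angle signed_chord_half_angle S3_def fst_conv snd_conv
    by algebra
qed

lemma signed_chord_cubic_identity:
  "signed_chord k l * signed_chord j k * signed_chord j l
     - signed_chord k l * signed_chord i l * signed_chord i k
     + signed_chord i j * signed_chord i l * signed_chord j l
     - signed_chord i j * signed_chord j k * signed_chord i k = 0"
proof -
  have "cos (i/2)^2 + sin (i/2)^2 = 1" "cos (j/2)^2 + sin (j/2)^2 = 1"
       "cos (k/2)^2 + sin (k/2)^2 = 1" "cos (l/2)^2 + sin (l/2)^2 = 1" by simp_all
  then show ?thesis unfolding signed_chord_half_angle by algebra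
qed

lemma det3_expand:
  "det3 a b c d e f g h i = a*e*i + b*f*g + c*d*h - a*f*h - b*d*i - c*e*g"
  unfolding det3_def det_3 by simp

lemma det3_circle_points_eq_0:
  fixes c :: "real \<times> real" and r ti tj tk tl :: real
  defines "Ai \<equiv> circle_point c r ti" and "Aj \<equiv> circle_point c r tj"
    and "Ak \<equiv> circle_point c r tk" and "Al \<equiv> circle_point c r tl"
  shows "det3 (sqd Ak Al) (S3 Ai Ak Al) (S3 Aj Ak Al)
              (- sqd Ai Aj) (S3 Ai Aj Ak) (S3 Ai Aj Al)
              0 (sqd Ai Ak) (sqd Aj Al) = 0"
    and "det3 (sqd Ak Al) (S3 Ai Ak Al) (S3 Aj Ak Al)
              (sqd Ai Aj) (S3 Ai Aj Al) (S3 Ai Aj Ak)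
              0 (sqd Ai Al) (sqd Aj Ak) = 0"
    and "det3 (sqd Aj Ak) (S3 Ai Aj Ak) (S3 Aj Ak Al)
              (- sqd Ai Al) (S3 Ai Ak Al) (S3 Ai Aj Al)
              0 (sqd Ai Ak) (sqd Aj Al) = 0"
proof -
  define cij where "cij = signed_chord ti tj"
  define cik where "cik = signed_chord ti tk"
  define cil where "cil = signed_chord ti tl"
  define cjk where "cjk = signed_chord tj tk"
  define cjl where "cjl = signed_chord tj tl"
  define ckl where "ckl = signed_chord tk tl"
  define cubic where
    "cubic = ckl * cjk * cjl - ckl * cil * cik + cij * cil * cjl - cij * cjk * cik"
  have cubic_0: "cubic = 0"
    unfolding cubic_def cij_def cik_def cil_def cjk_def cjl_def ckl_def
    by (rule signed_chord_cubic_identity)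
  have sqd_S3:
    "sqd Ai Aj = r^2 * cij^2" "sqd Ai Ak = r^2 * cik^2" "sqd Ai Al = r^2 * cil^2"
    "sqd Aj Ak = r^2 * cjk^2" "sqd Aj Al = r^2 * cjl^2" "sqd Ak Al = r^2 * ckl^2"
    "S3 Ai Aj Ak = r^2 * (cij * cjk * cik)" "S3 Ai Aj Al = r^2 * (cij * cjl * cil)"
    "S3 Ai Ak Al = r^2 * (cik * ckl * cil)" "S3 Aj Ak Al = r^2 * (cjk * ckl * cjl)"
    unfolding assms cij_def cik_def cil_def cjk_def cjl_def ckl_def
    by (simp_all only: sqd_circle_point S3_circle_point)
  have "det3 (sqd Ak Al) (S3 Ai Ak Al) (S3 Aj Ak Al)
              (- sqd Ai Aj) (S3 Ai Aj Ak) (S3 Ai Aj Al)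
              0 (sqd Ai Ak) (sqd Aj Al) = r^6 * cij * ckl * cik * cjl * cubic"
    unfolding det3_expand sqd_S3 cubic_def by algebra
  then show "det3 (sqd Ak Al) (S3 Ai Ak Al) (S3 Aj Ak Al)
              (- sqd Ai Aj) (S3 Ai Aj Ak) (S3 Ai Aj Al)
              0 (sqd Ai Ak) (sqd Aj Al) = 0"
    by (simp add: cubic_0)
  have "det3 (sqd Ak Al) (S3 Ai Ak Al) (S3 Aj Ak Al)
              (sqd Ai Aj) (S3 Ai Aj Al) (S3 Ai Aj Ak)
              0 (sqd Ai Al) (sqd Aj Ak) = r^6 * cij * ckl * cil * cjk * cubic"
    unfolding det3_expand sqd_S3 cubic_def by algebra
  then show "det3 (sqd Ak Al) (S3 Ai Ak Al) (S3 Aj Ak Al)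
              (sqd Ai Aj) (S3 Ai Aj Al) (S3 Ai Aj Ak)
              0 (sqd Ai Al) (sqd Aj Ak) = 0"
    by (simp add: cubic_0)
  have "det3 (sqd Aj Ak) (S3 Ai Aj Ak) (S3 Aj Ak Al)
              (- sqd Ai Al) (S3 Ai Ak Al) (S3 Ai Aj Al)
              0 (sqd Ai Ak) (sqd Aj Al) = r^6 * cjk * cil * cik * cjl * cubic"
    unfolding det3_expand sqd_S3 cubic_def by algebra
  then show "det3 (sqd Aj Ak) (S3 Ai Aj Ak) (S3 Aj Ak Al)
              (- sqd Ai Al) (S3 Ai Ak Al) (S3 Ai Aj Al)
              0 (sqd Ai Ak) (sqd Aj Al) = 0"
    by (simp add: cubic_0)
qed

theorem theorem2p6:
  fixes Ai Aj Ak Al :: "real \<times> real"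
  assumes "concyclic_anticlockwise Ai Aj Ak Al"
  shows "det3 (sqd Ak Al) (S3 Ai Ak Al) (S3 Aj Ak Al)
              (- sqd Ai Aj) (S3 Ai Aj Ak) (S3 Ai Aj Al)
              0 (sqd Ai Ak) (sqd Aj Al) = 0 \<and>
         det3 (sqd Ak Al) (S3 Ai Ak Al) (S3 Aj Ak Al)
              (sqd Ai Aj) (S3 Ai Aj Al) (S3 Ai Aj Ak)
              0 (sqd Ai Al) (sqd Aj Ak) = 0 \<and>
         det3 (sqd Aj Ak) (S3 Ai Aj Ak) (S3 Aj Ak Al)
              (- sqd Ai Al) (S3 Ai Ak Al) (S3 Ai Aj Al)
              0 (sqd Ai Ak) (sqd Aj Al) = 0"
proof -
  obtain c r ti tj tk tl where
    "Ai = circle_point c r ti" "Aj = circle_point c r tj"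
    "Ak = circle_point c r tk" "Al = circle_point c r tl"
    using assms unfolding concyclic_anticlockwise_def circle_point_def by blast
  then show ?thesis using det3_circle_points_eq_0 by simp
qed

end
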